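(* For all terms $M,M'$ and every substitution $\sigma$: if $M\sim_\alpha M'$ then $M\bullet\sigma\equiv M'\bullet\sigma$.
   Context: Let $\mathcal V$ (the variables) be a type with decidable equality, equipped with functions $\mathrm{encode}:\mathcal V\to\mathbb N$ and $\mathrm{decode}:\mathbb N\to\mathcal V$ such that $\mathrm{encode}(\mathrm{decode}\,n)=n$ for all $n$. Let $\mathcal C$ (the constants) be any type. Terms $\Lambda$ are generated by: $c\,k$ ($k\in\mathcal C$), $v\,x$ ($x\in\mathcal V$), $\lambda[x:A]M$, $\Pi[x:A]B$ and $M\cdot N$; in $\lambda[x:A]M$ and $\Pi[x:A]B$ the name $x$ binds in $M$ (resp. $B$) but not in $A$. Terms are raw first-order syntax (not identified up to renaming of bound variables) and $\equiv$ denotes syntactic identity. The list of free variables is $\mathrm{fv}(c\,k)=[\,]$, $\mathrm{fv}(v\,x)=[x]$, $\mathrm{fv}(\lambda[x:A]M)=\mathrm{fv}\,A\mathbin{+\!\!+}(\mathrm{fv}\,M-x)$, $\mathrm{fv}(\Pi[x:A]B)=\mathrm{fv}\,A\mathbin{+\!\!+}(\mathrm{fv}\,B-x)$, $\mathrm{fv}(M\cdot N)=\mathrm{fv}\,M\mathbin{+\!\!+}\mathrm{fv}\,N$, where $\mathbin{+\!\!+}$ is list concatenation and $xs-x$ deletes every occurrence of $x$ from $xs$. Fix a function $\chi':\mathrm{List}\,\mathbb N\to\mathbb N$ with $\chi'(ns)\notin ns$ for every list $ns$, and put $X'(xs)=\mathrm{decode}(\chi'(\mathrm{map}\ \mathrm{encode}\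 xs))$. A substitution is any function $\sigma:\mathcal V\to\Lambda$; $\iota=v$ is the identity substitution; $(\sigma,x:=N)(y)=N$ if $y=x$ and $\sigma\,y$ otherwise. For a substitution $\sigma$ and a list $xs$ of variables, $X(\sigma,xs)=X'(\text{concatenation of the lists }\mathrm{fv}(\sigma\,y)\text{ for }y\in xs)$. The action $M\bullet\sigma$ is defined by structural recursion: $c\,k\bullet\sigma=c\,k$; $v\,x\bullet\sigma=\sigma\,x$; $(M\cdot N)\bullet\sigma=(M\bullet\sigma)\cdot(N\bullet\sigma)$; $(\lambda[x:A]M)\bullet\sigma=\lambda[y:A\bullet\sigma](M\bullet(\sigma,x:=v\,y))$ with $y=X(\sigma,\mathrm{fv}\,M-x)$; $(\Pi[x:A]B)\bullet\sigma=\Pi[y:A\bullet\sigma](B\bullet(\sigma,x:=v\,y))$ with $y=X(\sigma,\mathrm{fv}\,B-x)$. Unary substitution is $M[x:=N]=M\bullet(\iota,x:=N)$. $\alpha$-conversion $\sim_\alpha$ is the inductively defined relation with rules: $c\,k\sim_\alpha c\,k$; $v\,x\sim_\alpha v\,x$; $M\cdot N\sim_\alpha M'\cdot N'$ if $M\sim_\alpha M'$ and $N\sim_\alpha N'$; $\lambda[x:A]M\sim_\alpha\lambda[x':A']M'$ if $A\sim_\alpha A'$ and there is a variable $y$ with $y\notin\mathrm{fv}\,M-x$, $y\notin\mathrm{fv}\,M'-x'$ and $M[x:=v\,y]\equiv M'[x':=v\,y]$; and the same rule with $\Pi$ in place of $\lambda$. *)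

theory Defs
  imports Main
begin

datatype ('c, 'v) trm =
    Con 'c
  | Var 'v
  | Lam 'v "('c, 'v) trm" "('c, 'v) trm"   (* Lam x A M  =  lambda[x:A] M *)
  | Pi 'v "('c, 'v) trm" "('c, 'v) trm"    (* Pi x A B   =  Pi[x:A] B *)
  | App "('c, 'v) trm" "('c, 'v) trm"

primrec fv :: "('c, 'v) trm \<Rightarrow> 'v list" where
  "fv (Con k) = []"
| "fv (Var x) = [x]"
| "fv (Lam x A M) = fv A @ removeAll x (fv M)"
| "fv (Pi x A B) = fv A @ removeAll x (fv B)"
| "fv (App M N) = fv M @ fv N"

definition Xp :: "('v \<Rightarrow> nat) \<Rightarrow> (nat \<Rightarrow> 'v) \<Rightarrow> (nat list \<Rightarrow> nat) \<Rightarrow> 'v list \<Rightarrow> 'v" where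
  "Xp enc dec chi xs = dec (chi (map enc xs))"

definition Xs :: "('v \<Rightarrow> nat) \<Rightarrow> (nat \<Rightarrow> 'v) \<Rightarrow> (nat list \<Rightarrow> nat) \<Rightarrow> ('v \<Rightarrow> ('c, 'v) trm) \<Rightarrow> 'v list \<Rightarrow> 'v" where
  "Xs enc dec chi \<sigma> xs = Xp enc dec chi (concat (map (\<lambda>y. fv (\<sigma> y)) xs))"

definition upd :: "('v \<Rightarrow> ('c, 'v) trm) \<Rightarrow> 'v \<Rightarrow> ('c, 'v) trm \<Rightarrow> 'v \<Rightarrow> ('c, 'v) trm" where
  "upd \<sigma> x N = (\<lambda>y. if y = x then N else \<sigma> y)"

primrec act :: "('v \<Rightarrow> nat) \<Rightarrow> (nat \<Rightarrow> 'v) \<Rightarrow> (nat list \<Rightarrow> nat) \<Rightarrow> ('c, 'v) trm \<Rightarrow> ('v \<Rightarrow> ('c, 'v) trm) \<Rightarrow> ('c, 'v) trm" where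
  "act enc dec chi (Con k) \<sigma> = Con k"
| "act enc dec chi (Var x) \<sigma> = \<sigma> x"
| "act enc dec chi (App M N) \<sigma> = App (act enc dec chi M \<sigma>) (act enc dec chi N \<sigma>)"
| "act enc dec chi (Lam x A M) \<sigma> =
     (let y = Xs enc dec chi \<sigma> (removeAll x (fv M))
      in Lam y (act enc dec chi A \<sigma>) (act enc dec chi M (upd \<sigma> x (Var y))))"
| "act enc dec chi (Pi x A B) \<sigma> =
     (let y = Xs enc dec chi \<sigma> (removeAll x (fv B))
      in Pi y (act enc dec chi A \<sigma>) (act enc dec chi B (upd \<sigma> x (Var y))))"

definition usubst :: "('v \<Rightarrow> nat) \<Rightarrow> (nat \<Rightarrow> 'v) \<Rightarrow> (nat list \<Rightarrow> nat) \<Rightarrow> ('c, 'v) trm \<Rightarrow> 'v \<Rightarrow> ('c, 'v) trm \<Rightarrow> ('c, 'v) trm" where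
  "usubst enc dec chi M x N = act enc dec chi M (upd Var x N)"

inductive alpha :: "('v \<Rightarrow> nat) \<Rightarrow> (nat \<Rightarrow> 'v) \<Rightarrow> (nat list \<Rightarrow> nat) \<Rightarrow> ('c, 'v) trm \<Rightarrow> ('c, 'v) trm \<Rightarrow> bool"
  for enc dec chi where
  alpha_con: "alpha enc dec chi (Con k) (Con k)"
| alpha_var: "alpha enc dec chi (Var x) (Var x)"
| alpha_app: "\<lbrakk>alpha enc dec chi M M'; alpha enc dec chi N N'\<rbrakk> \<Longrightarrow> alpha enc dec chi (App M N) (App M' N')"
| alpha_lam: "\<lbrakk>alpha enc dec chi A A'; y \<notin> set (removeAll x (fv M)); y \<notin> set (removeAll x' (fv M'));
               usubst enc dec chi M x (Var y) = usubst enc dec chi M' x' (Var y)\<rbrakk>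
              \<Longrightarrow> alpha enc dec chi (Lam x A M) (Lam x' A' M')"
| alpha_pi: "\<lbrakk>alpha enc dec chi A A'; y \<notin> set (removeAll x (fv B)); y \<notin> set (removeAll x' (fv B'));
               usubst enc dec chi B x (Var y) = usubst enc dec chi B' x' (Var y)\<rbrakk>
              \<Longrightarrow> alpha enc dec chi (Pi x A B) (Pi x' A' B')"

end

theory Submission
  imports Defs
begin

text \<open>
  The bound name chosen by \<open>(\<lambda>[x:A]M) \<bullet> \<sigma>\<close> depends only on \<open>\<sigma>\<close> and the list
  \<open>fv M - x\<close>, and freshness of that name yields the exact formula
  \<open>fv (M \<bullet> \<sigma>) = concat [fv (\<sigma> v). v \<leftarrow> fv M]\<close>. Together these make the action
  compose on the nose: \<open>(M \<bullet> \<sigma>) \<bullet> \<tau> = M \<bullet> (\<lambda>v. \<sigma> v \<bullet> \<tau>)\<close>.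
  Now if \<open>M[x:=y] = M'[x':=y]\<close> with \<open>y\<close> fresh, then \<open>fv M - x = fv M' - x'\<close>, so both
  binders are renamed to the same \<open>z\<close>, and by composition
  \<open>M \<bullet> (\<sigma>,x:=z) = M[x:=y] \<bullet> (\<sigma>,y:=z) = M'[x':=y] \<bullet> (\<sigma>,y:=z) = M' \<bullet> (\<sigma>,x':=z)\<close>.
\<close>

lemma Xs_cong:
  "(\<And>v. v \<in> set xs \<Longrightarrow> \<sigma> v = \<sigma>' v) \<Longrightarrow> Xs enc dec chi \<sigma> xs = Xs enc dec chi \<sigma>' xs"
  by (simp add: Xs_def cong: map_cong)

lemma removeAll_concat_fv_upd:
  assumes "\<forall>v\<in>set (removeAll x xs). z \<notin> set (fv (\<sigma> v))"
  shows "removeAll z (concat (map (\<lambda>v. fv (upd \<sigma> x (Var z) v)) xs))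
         = concat (map (\<lambda>v. fv (\<sigma> v)) (removeAll x xs))"
  using assms by (induction xs) (auto simp: upd_def)

lemma concat_map_concat:
  "concat (map f (concat xss)) = concat (map (\<lambda>xs. concat (map f xs)) xss)"
  by (induction xss) auto

locale fresh_choice =
  fixes enc :: "'v \<Rightarrow> nat" and dec :: "nat \<Rightarrow> 'v" and chi :: "nat list \<Rightarrow> nat"
  assumes enc_dec: "\<And>n. enc (dec n) = n"
    and chi_fresh: "\<And>ns. chi ns \<notin> set ns"
begin

abbreviation act_on :: "('c, 'v) trm \<Rightarrow> ('v \<Rightarrow> ('c, 'v) trm) \<Rightarrow> ('c, 'v) trm" (infixl "\<bullet>" 75)
  where "M \<bullet> \<sigma> \<equiv> act enc dec chi M \<sigma>"

abbreviation X :: "('v \<Rightarrow> ('c, 'v) trm) \<Rightarrow> 'v list \<Rightarrow> 'v"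
  where "X \<sigma> xs \<equiv> Xs enc dec chi \<sigma> xs"

lemma X_fresh:
  assumes "v \<in> set xs"
  shows "X \<sigma> xs \<notin> set (fv (\<sigma> v))"
proof
  let ?ys = "concat (map (\<lambda>y. fv (\<sigma> y)) xs)"
  assume "X \<sigma> xs \<in> set (fv (\<sigma> v))"
  with assms have "dec (chi (map enc ?ys)) \<in> set ?ys"
    by (auto simp: Xs_def Xp_def)
  then have "chi (map enc ?ys) \<in> set (map enc ?ys)"
    by (metis enc_dec image_eqI list.set_map)
  with chi_fresh show False by blast
qed

lemma act_cong: "\<forall>v\<in>set (fv M). \<sigma> v = \<sigma>' v \<Longrightarrow> M \<bullet> \<sigma> = M \<bullet> \<sigma>'"
proof (induction M arbitrary: \<sigma> \<sigma>')
  case (Lam x A M)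
  then have "X \<sigma> (removeAll x (fv M)) = X \<sigma>' (removeAll x (fv M))"
    by (intro Xs_cong) simp
  with Lam show ?case by (auto simp: Let_def upd_def)
next
  case (Pi x A M)
  then have "X \<sigma> (removeAll x (fv M)) = X \<sigma>' (removeAll x (fv M))"
    by (intro Xs_cong) simp
  with Pi show ?case by (auto simp: Let_def upd_def)
qed auto

lemma fv_act: "fv (M \<bullet> \<sigma>) = concat (map (\<lambda>v. fv (\<sigma> v)) (fv M))"
  by (induction M arbitrary: \<sigma>) (simp_all add: Let_def removeAll_concat_fv_upd X_fresh)

lemma X_act_upd:
  assumes "\<forall>v\<in>set (removeAll x (fv M)). z \<notin> set (fv (\<sigma> v))"
  shows "X \<tau> (removeAll z (fv (M \<bullet> upd \<sigma> x (Var z))))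
       = X (\<lambda>v. \<sigma> v \<bullet> \<tau>) (removeAll x (fv M))"
  using assms by (simp add: fv_act removeAll_concat_fv_upd Xs_def concat_map_concat comp_def)

lemma act_upd_comp:
  assumes "\<forall>v\<in>set (removeAll x (fv M)). z \<notin> set (fv (\<sigma> v))"
  shows "M \<bullet> (\<lambda>v. upd \<sigma> x (Var z) v \<bullet> upd \<tau> z (Var w))
       = M \<bullet> upd (\<lambda>v. \<sigma> v \<bullet> \<tau>) x (Var w)"
proof (rule act_cong, intro ballI)
  fix v
  assume "v \<in> set (fv M)"
  with assms have "v \<noteq> x \<Longrightarrow> \<sigma> v \<bullet> upd \<tau> z (Var w) = \<sigma> v \<bullet> \<tau>"
    by (intro act_cong) (auto simp: upd_def)
  then show "upd \<sigma> x (Var z) v \<bullet> upd \<tau> z (Var w) = upd (\<lambda>v. \<sigma> v \<bullet> \<tau>) x (Var w) v"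
    by (simp add: upd_def)
qed

lemma act_act: "M \<bullet> \<sigma> \<bullet> \<tau> = M \<bullet> (\<lambda>v. \<sigma> v \<bullet> \<tau>)"
proof (induction M arbitrary: \<sigma> \<tau>)
  case (Lam x A M)
  have "\<forall>v\<in>set (removeAll x (fv M)). X \<sigma> (removeAll x (fv M)) \<notin> set (fv (\<sigma> v))"
    using X_fresh by blast
  with Lam.IH show ?case by (simp add: Let_def X_act_upd act_upd_comp)
next
  case (Pi x A M)
  have "\<forall>v\<in>set (removeAll x (fv M)). X \<sigma> (removeAll x (fv M)) \<notin> set (fv (\<sigma> v))"
    using X_fresh by blast
  with Pi.IH show ?case by (simp add: Let_def X_act_upd act_upd_comp)
qed simp_all

lemma removeAll_fv_rename:
  assumes "y \<notin> set (removeAll x (fv M))"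
  shows "removeAll y (fv (usubst enc dec chi M x (Var y))) = removeAll x (fv M)"
proof -
  have fresh: "\<forall>v\<in>set (removeAll x (fv M)). y \<notin> set (fv (Var v))"
    using assms by auto
  show ?thesis
    unfolding usubst_def fv_act removeAll_concat_fv_upd[OF fresh] by simp
qed

lemma act_rename:
  assumes "y \<notin> set (removeAll x (fv M))"
  shows "usubst enc dec chi M x (Var y) \<bullet> upd \<sigma> y (Var z) = M \<bullet> upd \<sigma> x (Var z)"
  unfolding usubst_def act_act
proof (rule act_cong, intro ballI)
  fix v
  assume "v \<in> set (fv M)"
  with assms show "upd Var x (Var y) v \<bullet> upd \<sigma> y (Var z) = upd \<sigma> x (Var z) v"
    by (cases "v = x") (auto simp: upd_def)
qed

lemma act_binder_alpha:
  assumes "y \<notin> set (removeAll x (fv M))" and "y \<notin> set (removeAll x' (fv M'))"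
    and "usubst enc dec chi M x (Var y) = usubst enc dec chi M' x' (Var y)"
  shows "removeAll x (fv M) = removeAll x' (fv M')"
    and "M \<bullet> upd \<sigma> x (Var z) = M' \<bullet> upd \<sigma> x' (Var z)"
  using assms removeAll_fv_rename act_rename by metis+

lemma alpha_act: "alpha enc dec chi M M' \<Longrightarrow> M \<bullet> \<sigma> = M' \<bullet> \<sigma>"
proof (induction arbitrary: \<sigma> rule: alpha.induct)
  case (alpha_lam A A' y x M x' M')
  then show ?case
    using act_binder_alpha[OF alpha_lam.hyps(2-4)] by (simp add: Let_def)
next
  case (alpha_pi A A' y x B x' B')
  then show ?case
    using act_binder_alpha[OF alpha_pi.hyps(2-4)] by (simp add: Let_def)
qed simp_all

end

theorem mainTheorem4:
  fixes enc :: "'v \<Rightarrow> nat" and dec :: "nat \<Rightarrow> 'v" and chi :: "nat list \<Rightarrow> nat"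
    and M M' :: "('c, 'v) trm" and \<sigma> :: "'v \<Rightarrow> ('c, 'v) trm"
  assumes enc_dec: "\<And>n. enc (dec n) = n"
    and chi_fresh: "\<And>ns. chi ns \<notin> set ns"
    and "alpha enc dec chi M M'"
  shows "act enc dec chi M \<sigma> = act enc dec chi M' \<sigma>"
proof -
  interpret fresh_choice enc dec chi
    using enc_dec chi_fresh by unfold_locales
  show ?thesis
    using alpha_act \<open>alpha enc dec chi M M'\<close> .
qed

end
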